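(* Let $k\ge 2$. Every $k$-tree $G$ satisfies $\vec{\chi}(G)\le k$.
   Context: Digraphs have no loops and no parallel arcs, but may contain digons. $\vec{\chi}(G)$ is the dichromatic number (minimum number of colours in a colouring of $V(G)$ with no monochromatic directed cycle). $\Delta_{max}(G)=\max_v\max(d^+(v),d^-(v))$. $\mathcal B_1$ is the set of directed cycles (including digons), $\mathcal B_2$ the set of symmetric cycles of odd length (each edge of an odd undirected cycle replaced by a digon), and for $j\ge 3$, $\mathcal B_j=\{\overleftrightarrow K_{j+1}\}$ (symmetric complete graph on $j+1$ vertices). A digraph $G$ is a direct composition of $G_1,G_2$ on $v_1\in V(G_1)$, $v_2\in V(G_2)$ if obtained from their disjoint union by adding exactly one arc between $v_1$ and $v_2$. $G$ is a cyclic composition of $G_1,\dots,G_\ell$ ($\ell\ge2$) on $v_i\in V(G_i)$ if obtained from their disjoint union by adding arcs $v_iv_{i+1}$ ($1\le i\le \ell-1$) and $v_\ell v_1$. A $k$-tree is a digraph $G$ with $\Delta_{max}(G)\le k$ that can be built by: every member of $\mathcal B_{k-1}$ is a $k$-tree; a direct or cyclic composition of $k$-trees is a $k$-tree. *)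

theory Defs
  imports Main
begin

text \<open>A digraph is a pair (V, A) of a vertex set and an arc set.
  Well-formed digraphs: finite, arcs between vertices, no loops
  (parallel arcs are impossible since A is a set; digons are allowed).\<close>

type_synonym 'a digraph = "'a set \<times> ('a \<times> 'a) set"

definition verts :: "'a digraph \<Rightarrow> 'a set" where "verts G = fst G"
definition arcs :: "'a digraph \<Rightarrow> ('a \<times> 'a) set" where "arcs G = snd G"

definition wf_digraph :: "'a digraph \<Rightarrow> bool" where
  "wf_digraph G \<longleftrightarrow> finite (verts G) \<and> arcs G \<subseteq> verts G \<times> verts G
      \<and> (\<forall>v. (v, v) \<notin> arcs G)"

definition outdeg :: "'a digraph \<Rightarrow> 'a \<Rightarrow> nat" where
  "outdeg G v = card {w. (v, w) \<in> arcs G}"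

definition indeg :: "'a digraph \<Rightarrow> 'a \<Rightarrow> nat" where
  "indeg G v = card {u. (u, v) \<in> arcs G}"

definition delta_max :: "'a digraph \<Rightarrow> nat" where
  "delta_max G = Max ({0} \<union> (\<lambda>v. max (outdeg G v) (indeg G v)) ` verts G)"

definition cycle_arcs :: "'a list \<Rightarrow> ('a \<times> 'a) set" where
  "cycle_arcs vs = {(vs ! i, vs ! ((i + 1) mod length vs)) | i. i < length vs}"

definition is_dicycle_in :: "'a digraph \<Rightarrow> 'a list \<Rightarrow> bool" where
  "is_dicycle_in G vs \<longleftrightarrow> length vs \<ge> 2 \<and> distinct vs \<and> set vs \<subseteq> verts G
     \<and> cycle_arcs vs \<subseteq> arcs G"

definition acyclic_colouring :: "'a digraph \<Rightarrow> nat \<Rightarrow> ('a \<Rightarrow> nat) \<Rightarrow> bool" where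
  "acyclic_colouring G n c \<longleftrightarrow> (\<forall>v\<in>verts G. c v < n)
     \<and> \<not> (\<exists>vs. is_dicycle_in G vs \<and> (\<forall>u\<in>set vs. \<forall>w\<in>set vs. c u = c w))"

definition dichromatic_number :: "'a digraph \<Rightarrow> nat" where
  "dichromatic_number G = (LEAST n. \<exists>c. acyclic_colouring G n c)"

text \<open>The families B_j (as digraphs, i.e. up to the choice of vertex names).\<close>
definition is_directed_cycle :: "'a digraph \<Rightarrow> bool" where
  "is_directed_cycle G \<longleftrightarrow> (\<exists>vs. length vs \<ge> 2 \<and> distinct vs \<and>
      G = (set vs, cycle_arcs vs))"

definition is_sym_odd_cycle :: "'a digraph \<Rightarrow> bool" where
  "is_sym_odd_cycle G \<longleftrightarrow> (\<exists>vs. length vs \<ge> 3 \<and> odd (length vs) \<and> distinct vs \<and>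
      G = (set vs, cycle_arcs vs \<union> (cycle_arcs vs)\<inverse>))"

definition is_sym_complete :: "nat \<Rightarrow> 'a digraph \<Rightarrow> bool" where
  "is_sym_complete m G \<longleftrightarrow> finite (verts G) \<and> card (verts G) = m \<and>
      arcs G = {(x, y). x \<in> verts G \<and> y \<in> verts G \<and> x \<noteq> y}"

definition in_B :: "nat \<Rightarrow> 'a digraph \<Rightarrow> bool" where
  "in_B j G \<longleftrightarrow> (if j = 1 then is_directed_cycle G
                 else if j = 2 then is_sym_odd_cycle G
                 else j \<ge> 3 \<and> is_sym_complete (j + 1) G)"

inductive k_tree :: "nat \<Rightarrow> 'a digraph \<Rightarrow> bool" for k where
  base: "\<lbrakk> in_B (k - 1) G; delta_max G \<le> k \<rbrakk> \<Longrightarrow> k_tree k G"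
| direct: "\<lbrakk> k_tree k G1; k_tree k G2; verts G1 \<inter> verts G2 = {};
     v1 \<in> verts G1; v2 \<in> verts G2; e = (v1, v2) \<or> e = (v2, v1);
     G = (verts G1 \<union> verts G2, arcs G1 \<union> arcs G2 \<union> {e});
     delta_max G \<le> k \<rbrakk> \<Longrightarrow> k_tree k G"
| cyclic: "\<lbrakk> length Gs \<ge> 2; length vs = length Gs;
     \<forall>i < length Gs. k_tree k (Gs ! i);
     \<forall>i < length Gs. \<forall>j < length Gs. i \<noteq> j \<longrightarrow> verts (Gs ! i) \<inter> verts (Gs ! j) = {};
     \<forall>i < length Gs. vs ! i \<in> verts (Gs ! i);
     G = ((\<Union>i < length Gs. verts (Gs ! i)),
          (\<Union>i < length Gs. arcs (Gs ! i)) \<union> cycle_arcs vs);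
     delta_max G \<le> k \<rbrakk> \<Longrightarrow> k_tree k G"

end

(* Induction along the construction of k-trees.
   The base digraphs are coloured directly: a directed cycle with 2 colours (one vertex alone in
   its class), any symmetric cycle with 3, the symmetric complete digraph on k vertices with k.
   A monochromatic directed cycle that does not stay inside one part of a composition must leave
   every part it meets.  In a direct composition it would have to use the single connecting arc
   in both directions.  In a cyclic composition the only arc leaving G_i is v_i v_(i+1), so the
   cycle passes through all the v_i; permuting the colours of one part so that v_1 and v_2 get
   different colours rules this out. *)

theory Submission
  imports Defs "HOL-Combinatorics.Transposition"
begin

lemma cycle_arcs_iff:
  "(x, y) \<in> cycle_arcs vs \<longleftrightarrow> (\<exists>i<length vs. x = vs ! i \<and> y = vs ! ((i + 1) mod length vs))"
  unfolding cycle_arcs_def by blast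

lemma cycle_arcsI: "i < length vs \<Longrightarrow> (vs ! i, vs ! ((i + 1) mod length vs)) \<in> cycle_arcs vs"
  unfolding cycle_arcs_def by blast

lemma cycle_arcs_subset: "cycle_arcs vs \<subseteq> set vs \<times> set vs"
proof (clarsimp simp: cycle_arcs_iff)
  fix i assume "i < length vs"
  then have "Suc i mod length vs < length vs" by (intro mod_less_divisor) linarith
  then show "vs ! (Suc i mod length vs) \<in> set vs" by (rule nth_mem)
qed

lemma mod_succ_closed:
  fixes n a j :: nat
  assumes "a < n" "P a" and step: "\<And>i. i < n \<Longrightarrow> P i \<Longrightarrow> P ((i + 1) mod n)" and "j < n"
  shows "P j"
proof -
  have "P ((a + m) mod n)" for m
  proof (induction m)
    case 0
    show ?case using assms by simp
  next
    case (Suc m)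
    have "(a + m) mod n < n" using \<open>a < n\<close> by simp
    then have "P (((a + m) mod n + 1) mod n)" using Suc.IH by (rule step)
    then show ?case by (simp add: mod_Suc_eq)
  qed
  from this[of "n - a + j"] show ?thesis using assms by simp
qed

lemma dicycle_leaves_set:
  assumes "is_dicycle_in G ws" "x \<in> set ws" "x \<in> S" "y \<in> set ws" "y \<notin> S"
  obtains p q where "(p, q) \<in> arcs G" "p \<in> set ws" "q \<in> set ws" "p \<in> S" "q \<notin> S"
proof -
  let ?n = "length ws"
  obtain a b where a: "a < ?n" "ws ! a = x" and b: "b < ?n" "ws ! b = y"
    using assms(2,4) by (auto simp: in_set_conv_nth)
  have "\<exists>i<?n. ws ! i \<in> S \<and> ws ! ((i + 1) mod ?n) \<notin> S"
  proof (rule ccontr)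
    assume "\<not> ?thesis"
    then have "ws ! b \<in> S"
      using mod_succ_closed[of a ?n "\<lambda>i. ws ! i \<in> S"] a b assms(3) by blast
    then show False using b assms(5) by simp
  qed
  then obtain i where i: "i < ?n" "ws ! i \<in> S" "ws ! ((i + 1) mod ?n) \<notin> S" by blast
  have arc: "(ws ! i, ws ! ((i + 1) mod ?n)) \<in> cycle_arcs ws" using i(1) by (rule cycle_arcsI)
  then have "(ws ! i, ws ! ((i + 1) mod ?n)) \<in> arcs G"
    using assms(1) unfolding is_dicycle_in_def by blast
  moreover have "ws ! i \<in> set ws" "ws ! ((i + 1) mod ?n) \<in> set ws"
    using subsetD[OF cycle_arcs_subset arc] by auto
  ultimately show ?thesis using i(2,3) by (rule that)
qed

definition induced_in :: "'a digraph \<Rightarrow> 'a digraph \<Rightarrow> bool" where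
  "induced_in G H \<longleftrightarrow>
     (\<forall>x y. (x, y) \<in> arcs G \<longrightarrow> x \<in> verts H \<longrightarrow> y \<in> verts H \<longrightarrow> (x, y) \<in> arcs H)"

lemma dicycle_in_subgraph:
  assumes "is_dicycle_in G ws" "set ws \<subseteq> verts H" "induced_in G H"
  shows "is_dicycle_in H ws"
proof -
  from assms(1) have ws: "length ws \<ge> 2" "distinct ws" "cycle_arcs ws \<subseteq> arcs G"
    by (simp_all add: is_dicycle_in_def)
  have "cycle_arcs ws \<subseteq> arcs H"
  proof clarify
    fix x y assume xy: "(x, y) \<in> cycle_arcs ws"
    then have "x \<in> verts H" "y \<in> verts H" using cycle_arcs_subset assms(2) by blast+
    moreover have "(x, y) \<in> arcs G" using xy ws(3) by blast
    ultimately show "(x, y) \<in> arcs H" using assms(3) unfolding induced_in_def by blast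
  qed
  with ws assms(2) show ?thesis by (simp add: is_dicycle_in_def)
qed

definition monochromatic_dicycle :: "'a digraph \<Rightarrow> ('a \<Rightarrow> nat) \<Rightarrow> 'a list \<Rightarrow> bool"
  where
  "monochromatic_dicycle G c ws \<longleftrightarrow>
     is_dicycle_in G ws \<and> (\<forall>u\<in>set ws. \<forall>w\<in>set ws. c u = c w)"

lemma acyclic_colouring_iff:
  "acyclic_colouring G n c \<longleftrightarrow>
     (\<forall>v\<in>verts G. c v < n) \<and> (\<forall>ws. \<not> monochromatic_dicycle G c ws)"
  unfolding acyclic_colouring_def monochromatic_dicycle_def by blast

lemma dichromatic_number_le: "acyclic_colouring G n c \<Longrightarrow> dichromatic_number G \<le> n"
  unfolding dichromatic_number_def by (rule Least_le) blast

lemma acyclic_colouring_cong: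
  assumes "acyclic_colouring G n c" "\<And>v. v \<in> verts G \<Longrightarrow> c v = c' v"
  shows "acyclic_colouring G n c'"
  using assms unfolding acyclic_colouring_def is_dicycle_in_def by (metis subsetD)

lemma acyclic_colouring_comp:
  assumes c: "acyclic_colouring G n c" and \<sigma>: "inj_on \<sigma> {..<n}" "\<sigma> ` {..<n} \<subseteq> {..<n}"
  shows "acyclic_colouring G n (\<sigma> \<circ> c)"
  unfolding acyclic_colouring_iff
proof safe
  fix v assume "v \<in> verts G"
  then show "(\<sigma> \<circ> c) v < n" using c \<sigma>(2) unfolding acyclic_colouring_iff by auto
next
  fix ws assume mono: "monochromatic_dicycle G (\<sigma> \<circ> c) ws"
  then have "set ws \<subseteq> verts G" by (simp add: monochromatic_dicycle_def is_dicycle_in_def)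
  then have "\<forall>u\<in>set ws. c u \<in> {..<n}" using c unfolding acyclic_colouring_iff by auto
  with mono \<sigma>(1) have "monochromatic_dicycle G c ws"
    unfolding monochromatic_dicycle_def inj_on_def by (simp only: comp_apply) blast
  with c show False by (simp add: acyclic_colouring_iff)
qed

lemma acyclic_colouring_avoiding:
  assumes "acyclic_colouring G n c" "2 \<le> n" "v \<in> verts G"
  obtains c' where "acyclic_colouring G n c'" "c' v \<noteq> a"
proof (cases "c v = a")
  case True
  define b where "b = (if a = 0 then 1 else 0 :: nat)"
  have "a < n" using assms True by (auto simp: acyclic_colouring_iff)
  then have "acyclic_colouring G n (transpose a b \<circ> c)"
    using assms(2) by (intro acyclic_colouring_comp assms(1)) (auto simp: transpose_def b_def)
  moreover have "(transpose a b \<circ> c) v \<noteq> a" using True by (simp add: b_def)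
  ultimately show ?thesis by (rule that)
qed (use assms that in blast)

lemma no_monochromatic_dicycle_if_potential:
  fixes f :: "'a \<Rightarrow> nat"
  assumes "\<And>u w. (u, w) \<in> arcs G \<Longrightarrow> c u = c w \<Longrightarrow> f u < f w"
  shows "\<not> monochromatic_dicycle G c ws"
proof
  assume mono: "monochromatic_dicycle G c ws"
  then have "length ws \<ge> 2" and cyc: "cycle_arcs ws \<subseteq> arcs G"
    by (auto simp: monochromatic_dicycle_def is_dicycle_in_def)
  then have fin: "finite (f ` set ws)" "f ` set ws \<noteq> {}" by auto
  obtain x where x: "x \<in> set ws" "f x = Max (f ` set ws)" using Max_in[OF fin] by auto
  then obtain i where i: "i < length ws" "ws ! i = x" by (auto simp: in_set_conv_nth)
  let ?y = "ws ! ((i + 1) mod length ws)"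
  have arc: "(x, ?y) \<in> arcs G" using subsetD[OF cyc cycle_arcsI[OF i(1)]] unfolding i(2) .
  have y: "?y \<in> set ws" using subsetD[OF cycle_arcs_subset cycle_arcsI[OF i(1)]] by (rule SigmaD2)
  then have "c x = c ?y" using mono x(1) unfolding monochromatic_dicycle_def by blast
  with arc have "f x < f ?y" by (rule assms)
  moreover have "f ?y \<le> f x" using x(2) Max_ge[OF fin(1)] y by simp
  ultimately show False by simp
qed

lemma proper_colouring_no_monochromatic_dicycle:
  assumes "\<And>u w. (u, w) \<in> arcs G \<Longrightarrow> c u \<noteq> c w"
  shows "\<not> monochromatic_dicycle G c ws"
  by (rule no_monochromatic_dicycle_if_potential[where f = "\<lambda>_. 0"]) (use assms in blast)

lemma distinct_obtain_positions:
  assumes "distinct vs"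
  obtains pos where "\<And>i. i < length vs \<Longrightarrow> pos (vs ! i) = i"
  using the_inv_into_f_f[OF inj_on_nth[OF assms, of "{..<length vs}"]] that by auto

lemma cycle_arc_positions:
  assumes "\<And>i. i < length vs \<Longrightarrow> pos (vs ! i) = i" "(x, y) \<in> cycle_arcs vs"
  shows "pos y = pos x + 1 \<or> pos x = length vs - 1 \<and> pos y = 0"
proof -
  obtain i where i: "i < length vs" "x = vs ! i" "y = vs ! ((i + 1) mod length vs)"
    using assms(2) by (auto simp: cycle_arcs_iff)
  show ?thesis
  proof (cases "i + 1 < length vs")
    case True
    then show ?thesis using i assms(1) by simp
  next
    case False
    then have "i + 1 = length vs" "vs \<noteq> []" using i(1) by auto
    then show ?thesis using i assms(1)[of i] assms(1)[of 0] by simp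
  qed
qed

lemma directed_cycle_colouring:
  assumes "distinct vs" "length vs \<ge> 2"
  shows "\<exists>c. acyclic_colouring (set vs, cycle_arcs vs) 2 c"
proof -
  obtain pos where pos: "\<And>i. i < length vs \<Longrightarrow> pos (vs ! i) = i"
    using distinct_obtain_positions[OF assms(1)] by blast
  define c where "c v = (if pos v = 0 then 1 else 0 :: nat)" for v
  \<comment> \<open>pos increases along every arc except the one entering vs ! 0, which changes colour\<close>
  have "pos u < pos w" if "(u, w) \<in> cycle_arcs vs" "c u = c w" for u w
    using cycle_arc_positions[OF pos that(1)] that(2) assms(2) by (auto simp: c_def)
  then have "\<not> monochromatic_dicycle (set vs, cycle_arcs vs) c ws" for ws
    by (intro no_monochromatic_dicycle_if_potential) (auto simp: arcs_def)
  then show ?thesis by (intro exI[of _ c]) (simp add: acyclic_colouring_iff c_def)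
qed

lemma symmetric_cycle_colouring:
  assumes "distinct vs" "length vs \<ge> 2"
  shows "\<exists>c. acyclic_colouring (set vs, cycle_arcs vs \<union> (cycle_arcs vs)\<inverse>) 3 c"
proof -
  obtain pos where pos: "\<And>i. i < length vs \<Longrightarrow> pos (vs ! i) = i"
    using distinct_obtain_positions[OF assms(1)] by blast
  define c where "c v = (if pos v = length vs - 1 then 2 else pos v mod 2 :: nat)" for v
  have proper: "c u \<noteq> c w" if "(u, w) \<in> cycle_arcs vs" for u w
    using cycle_arc_positions[OF pos that]
  proof
    assume succ: "pos w = pos u + 1"
    have "pos u mod 2 \<noteq> (pos u + 1) mod 2" by presburger
    with succ show ?thesis unfolding c_def by auto
  next
    assume "pos u = length vs - 1 \<and> pos w = 0"
    with assms(2) show ?thesis unfolding c_def by auto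
  qed
  then have "\<not> monochromatic_dicycle (set vs, cycle_arcs vs \<union> (cycle_arcs vs)\<inverse>) c ws" for ws
    by (intro proper_colouring_no_monochromatic_dicycle) (auto simp: arcs_def dest: proper)
  moreover have "c v < 3" for v
  proof -
    have "pos v mod 2 < 3" by (rule order.strict_trans[of _ 2]) simp_all
    then show ?thesis unfolding c_def by simp
  qed
  ultimately show ?thesis by (auto simp: acyclic_colouring_iff)
qed

lemma sym_complete_colouring:
  assumes "is_sym_complete m G"
  shows "\<exists>c. acyclic_colouring G m c"
proof -
  have fin: "finite (verts G)" "card (verts G) = m"
    and arcs: "arcs G = {(x, y). x \<in> verts G \<and> y \<in> verts G \<and> x \<noteq> y}"
    using assms unfolding is_sym_complete_def by blast+
  obtain c where c: "bij_betw c (verts G) {0..<m}"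
    using ex_bij_betw_finite_nat[OF fin(1)] unfolding fin(2) by blast
  have "c u \<noteq> c w" if "(u, w) \<in> arcs G" for u w
    using that c unfolding arcs bij_betw_def inj_on_def by blast
  then have "\<not> monochromatic_dicycle G c ws" for ws
    by (rule proper_colouring_no_monochromatic_dicycle)
  moreover have "c v < m" if "v \<in> verts G" for v
    using that c unfolding bij_betw_def by auto
  ultimately show ?thesis unfolding acyclic_colouring_iff by blast
qed

lemma in_B_colouring:
  assumes "in_B j G" "1 \<le> j"
  shows "\<exists>c. acyclic_colouring G (j + 1) c"
proof -
  consider "j = 1" | "j = 2" | "3 \<le> j" using assms(2) by linarith
  then show ?thesis
  proof cases
    case 1
    then obtain vs where "length vs \<ge> 2" "distinct vs" "G = (set vs, cycle_arcs vs)"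
      using assms(1) unfolding in_B_def is_directed_cycle_def by auto
    then show ?thesis using 1 directed_cycle_colouring by (metis one_add_one)
  next
    case 2
    then obtain vs where "length vs \<ge> 3" "distinct vs"
        "G = (set vs, cycle_arcs vs \<union> (cycle_arcs vs)\<inverse>)"
      using assms(1) unfolding in_B_def is_sym_odd_cycle_def by auto
    then show ?thesis using 2 symmetric_cycle_colouring[of vs] by simp
  next
    case 3
    then have "is_sym_complete (j + 1) G" using assms(1) by (simp add: in_B_def)
    then show ?thesis by (rule sym_complete_colouring)
  qed
qed

lemma in_B_arcs_subset:
  assumes "in_B j G"
  shows "arcs G \<subseteq> verts G \<times> verts G"
proof -
  have "is_directed_cycle G \<or> is_sym_odd_cycle G \<or> is_sym_complete (j + 1) G"
    using assms unfolding in_B_def by (simp split: if_splits)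
  then show ?thesis
  proof (elim disjE)
    assume "is_directed_cycle G"
    then obtain vs where "G = (set vs, cycle_arcs vs)" unfolding is_directed_cycle_def by blast
    then show ?thesis using cycle_arcs_subset[of vs] by (simp add: verts_def arcs_def)
  next
    assume "is_sym_odd_cycle G"
    then obtain vs where "G = (set vs, cycle_arcs vs \<union> (cycle_arcs vs)\<inverse>)"
      unfolding is_sym_odd_cycle_def by blast
    then show ?thesis using cycle_arcs_subset[of vs] by (auto simp: verts_def arcs_def)
  qed (auto simp: is_sym_complete_def)
qed

lemma k_tree_arcs_subset: "k_tree k G \<Longrightarrow> arcs G \<subseteq> verts G \<times> verts G"
proof (induction rule: k_tree.induct)
  case (base G)
  from base.hyps(1) show ?case by (rule in_B_arcs_subset)
next
  case (direct G1 G2 v1 v2 e G)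
  have V: "verts G = verts G1 \<union> verts G2" and A: "arcs G = arcs G1 \<union> arcs G2 \<union> {e}"
    using direct.hyps(7) by (simp_all add: verts_def arcs_def)
  have "e \<in> verts G \<times> verts G" using direct.hyps(4-6) unfolding V by blast
  with direct.IH show ?case unfolding V A by blast
next
  case (cyclic Gs vs G)
  let ?V = "\<Union>i<length Gs. verts (Gs ! i)"
  have V: "verts G = ?V" and A: "arcs G = (\<Union>i<length Gs. arcs (Gs ! i)) \<union> cycle_arcs vs"
    using cyclic.hyps(5) by (simp_all add: verts_def arcs_def)
  have "set vs \<subseteq> ?V"
  proof
    fix v assume "v \<in> set vs"
    then obtain i where "i < length vs" "v = vs ! i" by (auto simp: in_set_conv_nth)
    then show "v \<in> ?V" using cyclic.hyps(2,4) by auto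
  qed
  then have "cycle_arcs vs \<subseteq> ?V \<times> ?V" using cycle_arcs_subset[of vs] by blast
  moreover have "arcs (Gs ! i) \<subseteq> ?V \<times> ?V" if "i < length Gs" for i
  proof -
    have "arcs (Gs ! i) \<subseteq> verts (Gs ! i) \<times> verts (Gs ! i)" using cyclic.IH that by blast
    moreover have "verts (Gs ! i) \<subseteq> ?V" using that by blast
    ultimately show ?thesis by blast
  qed
  ultimately show ?case unfolding V A by blast
qed

lemma monochromatic_dicycle_leaves_block:
  assumes mono: "monochromatic_dicycle G c ws" and H: "acyclic_colouring H k c"
    and induced: "induced_in G H" and x: "x \<in> set ws" "x \<in> verts H"
  obtains p q where "(p, q) \<in> arcs G" "p \<in> set ws" "q \<in> set ws" "p \<in> verts H" "q \<notin> verts H"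
proof (cases "set ws \<subseteq> verts H")
  case True
  with mono induced have "monochromatic_dicycle H c ws"
    unfolding monochromatic_dicycle_def using dicycle_in_subgraph by blast
  with H show ?thesis by (simp add: acyclic_colouring_iff)
next
  case False
  then obtain y where y: "y \<in> set ws" "y \<notin> verts H" by blast
  from mono have "is_dicycle_in G ws" by (simp add: monochromatic_dicycle_def)
  from dicycle_leaves_set[OF this x y] that show ?thesis .
qed

locale direct_composition =
  fixes G1 G2 :: "'a digraph" and v1 v2 :: 'a and e :: "'a \<times> 'a" and G :: "'a digraph"
  assumes arcs1: "arcs G1 \<subseteq> verts G1 \<times> verts G1"
    and arcs2: "arcs G2 \<subseteq> verts G2 \<times> verts G2"
    and disjoint: "verts G1 \<inter> verts G2 = {}"
    and v1: "v1 \<in> verts G1" and v2: "v2 \<in> verts G2"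
    and e: "e = (v1, v2) \<or> e = (v2, v1)"
    and G_eq: "G = (verts G1 \<union> verts G2, arcs G1 \<union> arcs G2 \<union> {e})"
begin

lemma verts_eq: "verts G = verts G1 \<union> verts G2"
  and arcs_eq: "arcs G = arcs G1 \<union> arcs G2 \<union> {e}"
  using G_eq by (simp_all add: verts_def arcs_def)

lemma e_crosses: "H \<in> {G1, G2} \<Longrightarrow> fst e \<in> verts H \<Longrightarrow> snd e \<notin> verts H"
  using e disjoint v1 v2 by auto

lemma induced_in_block:
  assumes "H \<in> {G1, G2}"
  shows "induced_in G H"
  unfolding induced_in_def
proof clarify
  fix x y assume xy: "(x, y) \<in> arcs G" "x \<in> verts H" "y \<in> verts H"
  then have "(x, y) \<noteq> e" using e_crosses[OF assms] by auto
  with assms xy show "(x, y) \<in> arcs H" using arcs1 arcs2 disjoint unfolding arcs_eq by auto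
qed

lemma arc_leaving_block:
  "H \<in> {G1, G2} \<Longrightarrow> (x, y) \<in> arcs G \<Longrightarrow> x \<in> verts H \<Longrightarrow> y \<notin> verts H \<Longrightarrow> (x, y) = e"
  using arcs1 arcs2 disjoint unfolding arcs_eq by auto

lemma acyclic_colouring_if_blocks:
  assumes c1: "acyclic_colouring G1 k c" and c2: "acyclic_colouring G2 k c"
  shows "acyclic_colouring G k c"
proof -
  have "\<not> monochromatic_dicycle G c ws" for ws
  proof
    assume mono: "monochromatic_dicycle G c ws"
    \<comment> \<open>the cycle leaves every block it meets through e, so the tail of e lies in both blocks\<close>
    have leaves: "fst e \<in> verts H \<and> snd e \<in> set ws"
      if H: "H \<in> {G1, G2}" and x: "x \<in> set ws" "x \<in> verts H" for H x
    proof -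
      have Hc: "acyclic_colouring H k c" using H c1 c2 by auto
      obtain p q
        where "(p, q) \<in> arcs G" "p \<in> set ws" "q \<in> set ws" "p \<in> verts H" "q \<notin> verts H"
        using monochromatic_dicycle_leaves_block[OF mono Hc induced_in_block[OF H] x] .
      with arc_leaving_block[OF H] show ?thesis by force
    qed
    from mono have "ws \<noteq> []" and ws: "set ws \<subseteq> verts G"
      by (auto simp: monochromatic_dicycle_def is_dicycle_in_def)
    then obtain x where "x \<in> set ws" by (cases ws) auto
    then obtain H where H: "H \<in> {G1, G2}" "x \<in> verts H" using ws unfolding verts_eq by blast
    with \<open>x \<in> set ws\<close> have e_H: "fst e \<in> verts H" "snd e \<in> set ws" using leaves by blast+
    then obtain H' where H': "H' \<in> {G1, G2}" "snd e \<in> verts H'"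
      using ws unfolding verts_eq by blast
    with e_H(2) have "fst e \<in> verts H'" using leaves by blast
    moreover have "H \<noteq> H'" using e_crosses[OF H(1) e_H(1)] H'(2) by blast
    ultimately show False using H(1) H'(1) e_H(1) disjoint by blast
  qed
  moreover have "\<forall>v\<in>verts G. c v < k" using c1 c2 unfolding verts_eq acyclic_colouring_iff by blast
  ultimately show ?thesis by (simp add: acyclic_colouring_iff)
qed

lemma acyclic_colouring_exists:
  assumes "acyclic_colouring G1 k c1" "acyclic_colouring G2 k c2"
  shows "\<exists>c. acyclic_colouring G k c"
proof -
  define c where "c v = (if v \<in> verts G1 then c1 v else c2 v)" for v
  have "acyclic_colouring G1 k c" using assms(1) by (rule acyclic_colouring_cong) (simp add: c_def)
  moreover have "acyclic_colouring G2 k c" using assms(2)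
    by (rule acyclic_colouring_cong) (use disjoint in \<open>auto simp: c_def\<close>)
  ultimately show ?thesis by (blast intro: acyclic_colouring_if_blocks)
qed

end

locale cyclic_composition =
  fixes Gs :: "'a digraph list" and vs :: "'a list" and G :: "'a digraph"
  assumes two_le_length: "2 \<le> length Gs"
    and length_vs: "length vs = length Gs"
    and disjoint: "\<forall>i < length Gs. \<forall>j < length Gs.
                     i \<noteq> j \<longrightarrow> verts (Gs ! i) \<inter> verts (Gs ! j) = {}"
    and vs_in: "\<forall>i < length Gs. vs ! i \<in> verts (Gs ! i)"
    and G_eq: "G = ((\<Union>i < length Gs. verts (Gs ! i)),
                   (\<Union>i < length Gs. arcs (Gs ! i)) \<union> cycle_arcs vs)"
    and arcs_Gs: "\<forall>i < length Gs. arcs (Gs ! i) \<subseteq> verts (Gs ! i) \<times> verts (Gs ! i)"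
begin

abbreviation "L \<equiv> length Gs"

lemma mod_length_less: "n mod L < L"
  using two_le_length by (intro mod_less_divisor) linarith

lemma block_unique:
  "i < L \<Longrightarrow> j < L \<Longrightarrow> x \<in> verts (Gs ! i) \<Longrightarrow> x \<in> verts (Gs ! j) \<Longrightarrow> i = j"
  using disjoint by blast

lemma succ_mod_ne:
  assumes "i < L"
  shows "(i + 1) mod L \<noteq> i"
proof (cases "i + 1 < L")
  case False
  then have "i + 1 = L" using assms by simp
  then show ?thesis using two_le_length by auto
qed simp

lemma arc_from_block:
  assumes "(x, y) \<in> arcs G" "i < L" "x \<in> verts (Gs ! i)"
  shows "(x, y) \<in> arcs (Gs ! i) \<or> x = vs ! i \<and> y = vs ! ((i + 1) mod L)"
proof -
  have "(\<exists>m<L. (x, y) \<in> arcs (Gs ! m)) \<or> (x, y) \<in> cycle_arcs vs"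
    using assms(1) G_eq by (auto simp: arcs_def)
  then show ?thesis
  proof (elim disjE exE conjE)
    fix m assume m: "m < L" "(x, y) \<in> arcs (Gs ! m)"
    then have "m = i" using arcs_Gs block_unique assms(2,3) by blast
    with m show ?thesis by simp
  next
    assume "(x, y) \<in> cycle_arcs vs"
    then obtain m where m: "m < L" "x = vs ! m" "y = vs ! ((m + 1) mod L)"
      by (auto simp: cycle_arcs_iff length_vs)
    then have "m = i" using vs_in block_unique assms(2,3) by blast
    with m show ?thesis by simp
  qed
qed

lemma induced_in_block:
  assumes "i < L"
  shows "induced_in G (Gs ! i)"
  unfolding induced_in_def
proof (intro allI impI)
  fix x y assume xy: "(x, y) \<in> arcs G" "x \<in> verts (Gs ! i)" "y \<in> verts (Gs ! i)"
  show "(x, y) \<in> arcs (Gs ! i)"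
  proof (rule ccontr)
    assume "(x, y) \<notin> arcs (Gs ! i)"
    then have "y = vs ! ((i + 1) mod L)" using arc_from_block xy(1,2) assms by blast
    moreover have "(i + 1) mod L < L" by (rule mod_length_less)
    ultimately have "(i + 1) mod L = i" using vs_in block_unique assms xy(3) by blast
    with succ_mod_ne assms show False by blast
  qed
qed

lemma acyclic_colouring_if_ends_differ:
  assumes blocks: "\<forall>i<L. acyclic_colouring (Gs ! i) k c" and ends: "c (vs ! 0) \<noteq> c (vs ! 1)"
  shows "acyclic_colouring G k c"
proof -
  have "\<not> monochromatic_dicycle G c ws" for ws
  proof
    assume mono: "monochromatic_dicycle G c ws"
    \<comment> \<open>the cycle leaves every block it meets through its link, hence it runs through all links\<close>
    have hits_next: "vs ! ((i + 1) mod L) \<in> set ws"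
      if i: "i < L" and x: "x \<in> set ws" "x \<in> verts (Gs ! i)" for i x
    proof -
      obtain p q where "(p, q) \<in> arcs G" "p \<in> set ws" "q \<in> set ws"
          "p \<in> verts (Gs ! i)" "q \<notin> verts (Gs ! i)"
        using monochromatic_dicycle_leaves_block[OF mono blocks[rule_format, OF i]
            induced_in_block[OF i] x] .
      with arc_from_block i arcs_Gs show ?thesis by blast
    qed
    from mono have "ws \<noteq> []" and ws: "set ws \<subseteq> verts G"
      by (auto simp: monochromatic_dicycle_def is_dicycle_in_def)
    then obtain x where "x \<in> set ws" by (cases ws) auto
    then obtain i where i: "i < L" "x \<in> verts (Gs ! i)" using ws G_eq by (auto simp: verts_def)
    have start: "vs ! ((i + 1) mod L) \<in> set ws" using hits_next[OF i(1) \<open>x \<in> set ws\<close> i(2)] .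
    have step: "vs ! ((l + 1) mod L) \<in> set ws" if "l < L" "vs ! l \<in> set ws" for l
      using hits_next[OF that] vs_in that(1) by blast
    have all: "vs ! j \<in> set ws" if "j < L" for j
      using mod_succ_closed[where P = "\<lambda>j. vs ! j \<in> set ws"] mod_length_less start step that
      by blast
    have "vs ! 0 \<in> set ws" "vs ! 1 \<in> set ws"
      by (rule all, use two_le_length in linarith)+
    with mono ends show False unfolding monochromatic_dicycle_def by blast
  qed
  moreover have "\<forall>v\<in>verts G. c v < k"
    using blocks G_eq by (auto simp: verts_def acyclic_colouring_iff)
  ultimately show ?thesis by (simp add: acyclic_colouring_iff)
qed

lemma acyclic_colouring_exists:
  assumes "\<forall>i<L. \<exists>c. acyclic_colouring (Gs ! i) k c" "2 \<le> k"
  shows "\<exists>c. acyclic_colouring G k c"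
proof -
  have L: "0 < L" "1 < L" using two_le_length by linarith+
  obtain cs where cs: "\<And>i. i < L \<Longrightarrow> acyclic_colouring (Gs ! i) k (cs i)"
    using assms(1) by metis
  obtain c0 where c0: "acyclic_colouring (Gs ! 0) k c0" "c0 (vs ! 0) \<noteq> cs 1 (vs ! 1)"
    using acyclic_colouring_avoiding[OF cs[OF L(1)] assms(2)] vs_in L(1) by blast
  define block where "block v = (THE i. i < L \<and> v \<in> verts (Gs ! i))" for v
  have block: "block v = i" if "i < L" "v \<in> verts (Gs ! i)" for i v
    unfolding block_def using that block_unique by blast
  define c where "c v = (if block v = 0 then c0 v else cs (block v) v)" for v
  have "acyclic_colouring (Gs ! i) k c" if "i < L" for i
  proof (cases "i = 0")
    case True
    show ?thesis using c0(1) unfolding True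
      by (rule acyclic_colouring_cong) (simp add: c_def block[OF L(1)])
  next
    case False
    show ?thesis using cs[OF that]
      by (rule acyclic_colouring_cong) (simp add: c_def block[OF that] False)
  qed
  moreover have "c (vs ! 0) \<noteq> c (vs ! 1)"
    using c0(2) vs_in L by (simp add: c_def block[OF L(1)] block[OF L(2)])
  ultimately show ?thesis using acyclic_colouring_if_ends_differ by blast
qed

end

lemma k_tree_colouring:
  assumes "k_tree k G" "2 \<le> k"
  shows "\<exists>c. acyclic_colouring G k c"
  using assms(1)
proof (induction rule: k_tree.induct)
  case (base G)
  have "\<exists>c. acyclic_colouring G (k - 1 + 1) c"
    using base.hyps(1) assms(2) by (intro in_B_colouring) auto
  with assms(2) show ?case by simp
next
  case (direct G1 G2 v1 v2 e G)
  from direct.hyps(1-7) interpret direct_composition G1 G2 v1 v2 e G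
    by (simp add: direct_composition_def k_tree_arcs_subset)
  from direct.IH show ?case by (blast intro: acyclic_colouring_exists)
next
  case (cyclic Gs vs G)
  have "\<forall>i<length Gs. arcs (Gs ! i) \<subseteq> verts (Gs ! i) \<times> verts (Gs ! i)"
    using cyclic.IH k_tree_arcs_subset by blast
  with cyclic.hyps interpret cyclic_composition Gs vs G
    by (simp add: cyclic_composition_def)
  from cyclic.IH assms(2) show ?case by (intro acyclic_colouring_exists) simp_all
qed

theorem mainTheorem6:
  fixes k :: nat and G :: "'a digraph"
  assumes "k \<ge> 2" and "k_tree k G"
  shows "dichromatic_number G \<le> k"
  using k_tree_colouring[OF assms(2,1)] dichromatic_number_le by blast

end
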